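(* Let $\mathcal{X}$ be a finite set, $\phi\notin\mathcal{X}$ an extra symbol, and $L,T\in\mathbb{N}$. Fix a permutation of $\{0,\dots,L-1\}$ and let $i_0,\dots,i_{T-1}\in\{0,\dots,L-1\}$ be the positions obtained by cycling through this permutation in round-robin fashion. For $t=0,\dots,T-1$ let $\Pi_t$ be a probability distribution on $\mathcal{X}\cup\{\phi\}$. Let $X_0$ be a random element of $\mathcal{X}^L$ with an arbitrary distribution $P^*$, and let $Z_0,\dots,Z_{T-1}$ be independent random variables, independent of $X_0$, with $Z_t\sim\Pi_t$. Define the forward process $X_0,X_1,\dots,X_T$ by: $X_{t+1,j}=X_{t,j}$ for $j\neq i_t$; $X_{t+1,i_t}=X_{t,i_t}$ if $Z_t=\phi$; and $X_{t+1,i_t}=Z_t$ if $Z_t\in\mathcal{X}$. Suppose that the conditional distribution $\Pi_t(\cdot\mid\mathcal{X})$ equals a fixed distribution $\Pi(\cdot\mid\mathcal{X})$ on $\mathcal{X}$ for every $t$, and that there is $\epsilon>0$ with $\Pi_t(\phi)\le 1-\epsilon$ for all $t$. Then $$\mathsf{TV}\big(\mathsf{Law}(X_T),\,\Pi(\cdot\mid\mathcal{X})^{\otimes L}\big)\le L(1-\epsilon)^{\lfloor T/L\rfloor},$$ and in particular $\mathsf{Law}(X_T)$ converges to $\Pi(\cdot\mid\mathcal{X})^{\otimes L}$ in total variation as $T\to\infty$.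
   Context: $\mathsf{TV}$ denotes total variation distance. For a distribution $Q$ on a finite set $\mathcal{Y}$ and $A\subseteq\mathcal{Y}$ with $Q(A)>0$, $Q(\cdot\mid A)$ denotes the conditional distribution of $Q$ on $A$. $X_{t,j}$ denotes the $j$-th coordinate of $X_t\in\mathcal{X}^L$, coordinates indexed by $\{0,\dots,L-1\}$. *)

theory Defs
  imports "HOL-Probability.Probability"
begin

text \<open>States of the chain: lists over 'x of length L (coordinates 0..L-1).
  The extra symbol phi is represented by None in 'x option.\<close>

definition TV :: "'a pmf \<Rightarrow> 'a pmf \<Rightarrow> real" where
  "TV p q = (1/2) * (\<Sum>\<^sub>\<infinity> x. \<bar>pmf p x - pmf q x\<bar>)"

definition rr_pos :: "(nat \<Rightarrow> nat) \<Rightarrow> nat \<Rightarrow> nat \<Rightarrow> nat" where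
  "rr_pos \<sigma> L t = \<sigma> (t mod L)"

definition step :: "nat \<Rightarrow> 'x list \<Rightarrow> 'x option \<Rightarrow> 'x list" where
  "step i x z = (case z of None \<Rightarrow> x | Some a \<Rightarrow> x[i := a])"

primrec fwd_law :: "'x list pmf \<Rightarrow> (nat \<Rightarrow> 'x option pmf) \<Rightarrow> (nat \<Rightarrow> nat) \<Rightarrow> nat \<Rightarrow> nat \<Rightarrow> 'x list pmf" where
  "fwd_law P Pis \<sigma> L 0 = P"
| "fwd_law P Pis \<sigma> L (Suc t) =
     bind_pmf (fwd_law P Pis \<sigma> L t) (\<lambda>x. map_pmf (step (rr_pos \<sigma> L t) x) (Pis t))"

primrec prod_pow :: "nat \<Rightarrow> 'x pmf \<Rightarrow> 'x list pmf" where
  "prod_pow 0 q = return_pmf []"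
| "prod_pow (Suc n) q = bind_pmf q (\<lambda>a. map_pmf (Cons a) (prod_pow n q))"

end

theory Submission
  imports Defs
begin

(* Write each noise Z_t as a coin with success probability 1 - Pi_t(phi) followed, on success,
   by an independent draw from Pi(.|X).  Redrawing one coordinate of an i.i.d. vector from its
   marginal keeps it i.i.d., so X_T is a mixture, over the random set S of coordinates hit by a
   successful coin, of laws in which the coordinates in S are i.i.d. Pi(.|X) and independent of
   the others.  On the event that S contains every coordinate the mixture component is exactly
   Pi(.|X)^L, so the TV distance is at most P(S incomplete), which a union bound controls:
   coordinate j is visited at least floor(T/L) times and each visit misses with probability
   at most 1 - epsilon. *)

lemma measure_pmf_range_Some:
  fixes p :: "'a option pmf"
  shows "measure p (range Some) = 1 - pmf p None"
proof -
  have "range Some = UNIV - {None :: 'a option}"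
    by (auto simp: notin_range_Some)
  then show ?thesis
    using measure_pmf.prob_compl[of "{None}" p] by (simp add: measure_pmf_single)
qed

lemma set_pmf_inter_range_Some:
  fixes p :: "'a option pmf"
  assumes "pmf p None < 1"
  shows "set_pmf p \<inter> range Some \<noteq> {}"
  using assms measure_pmf_zero_iff[of p "range Some"] by (auto simp: measure_pmf_range_Some)

lemma option_pmf_eq_bind_bernoulli:
  fixes p :: "'a option pmf"
  assumes "pmf p None < 1"
  shows "p = bind_pmf (bernoulli_pmf (1 - pmf p None))
               (\<lambda>b. if b then cond_pmf p (range Some) else return_pmf None)"
proof (rule pmf_eqI)
  fix z
  show "pmf p z = pmf (bind_pmf (bernoulli_pmf (1 - pmf p None))
               (\<lambda>b. if b then cond_pmf p (range Some) else return_pmf None)) z"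
    using assms set_pmf_inter_range_Some[OF assms]
    by (cases z) (auto simp: pmf_bind pmf_cond measure_pmf_range_Some)
qed

lemma map_step_eq_bind_bernoulli:
  assumes "pmf p None < 1"
  shows "map_pmf (step i x) p = bind_pmf (bernoulli_pmf (1 - pmf p None))
     (\<lambda>b. if b then map_pmf (\<lambda>a. x[i := a]) (map_pmf the (cond_pmf p (range Some)))
           else return_pmf x)"
proof -
  have "map_pmf (step i x) (cond_pmf p (range Some))
      = map_pmf (\<lambda>a. x[i := a]) (map_pmf the (cond_pmf p (range Some)))"
    using set_pmf_inter_range_Some[OF assms]
    unfolding pmf.map_comp by (intro map_pmf_cong) (auto simp: step_def)
  then show ?thesis
    by (subst option_pmf_eq_bind_bernoulli[OF assms])
       (auto simp: map_bind_pmf step_def intro!: bind_pmf_cong)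
qed

lemma set_prod_pow: "set_pmf (prod_pow n q) \<subseteq> {xs. length xs = n}"
  by (induction n) auto

lemma bind_prod_pow_update: "bind_pmf (prod_pow n q) (\<lambda>y. map_pmf (\<lambda>a. y[i := a]) q) = prod_pow n q"
proof (induction n arbitrary: i)
  case 0
  have "list_update [] i = (\<lambda>_::'a. [])" by auto
  then show ?case by (simp add: bind_return_pmf)
next
  case (Suc n)
  show ?case
  proof (cases i)
    case 0
    have "list_update (x # xs) 0 = (\<lambda>a. a # xs)" for x :: 'a and xs by auto
    then have "bind_pmf (prod_pow (Suc n) q) (\<lambda>y. map_pmf (\<lambda>a. y[i := a]) q)
        = bind_pmf q (\<lambda>_. bind_pmf (prod_pow n q) (\<lambda>ys. map_pmf (\<lambda>a. a # ys) q))"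
      using 0 by (simp add: bind_assoc_pmf bind_map_pmf)
    also have "\<dots> = prod_pow (Suc n) q"
      by (simp add: map_pmf_def bind_commute_pmf[of "prod_pow n q"])
    finally show ?thesis .
  next
    case (Suc k)
    have "list_update (x # xs) (Suc k) = (\<lambda>a. x # xs[k := a])" for x :: 'a and xs by auto
    then have "bind_pmf (prod_pow (Suc n) q) (\<lambda>y. map_pmf (\<lambda>a. y[i := a]) q)
        = bind_pmf q (\<lambda>x. map_pmf (Cons x)
            (bind_pmf (prod_pow n q) (\<lambda>ys. map_pmf (\<lambda>a. ys[k := a]) q)))"
      using Suc by (simp add: bind_assoc_pmf bind_map_pmf map_bind_pmf pmf.map_comp o_def)
    then show ?thesis
      using Suc.IH by simp
  qed
qed

definition merge_list :: "nat set \<Rightarrow> 'a list \<Rightarrow> 'a list \<Rightarrow> 'a list" where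
  "merge_list S x y = map (\<lambda>j. if j \<in> S then y ! j else x ! j) [0..<length x]"

lemma merge_list_empty: "merge_list {} x = (\<lambda>_. x)"
  unfolding merge_list_def by (simp add: map_nth)

lemma merge_list_all: "length y = length x \<Longrightarrow> {..<length x} \<subseteq> S \<Longrightarrow> merge_list S x y = y"
  unfolding merge_list_def by (auto intro!: nth_equalityI)

lemma merge_list_update:
  "length y = length x \<Longrightarrow> (merge_list S x y)[i := a] = merge_list (insert i S) x (y[i := a])"
  unfolding merge_list_def by (cases "i < length x") (auto intro!: nth_equalityI simp: nth_list_update)

lemma bind_merge_prod_pow_update:
  assumes "length x = n"
  shows "bind_pmf (map_pmf (merge_list S x) (prod_pow n q)) (\<lambda>y. map_pmf (\<lambda>a. y[i := a]) q)
       = map_pmf (merge_list (insert i S) x) (prod_pow n q)"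
proof -
  have "bind_pmf (map_pmf (merge_list S x) (prod_pow n q)) (\<lambda>y. map_pmf (\<lambda>a. y[i := a]) q)
      = bind_pmf (prod_pow n q) (\<lambda>y. map_pmf (\<lambda>a. merge_list (insert i S) x (y[i := a])) q)"
    unfolding bind_map_pmf using set_prod_pow assms
    by (fastforce intro!: bind_pmf_cong map_pmf_cong merge_list_update)
  also have "\<dots> = map_pmf (merge_list (insert i S) x)
                      (bind_pmf (prod_pow n q) (\<lambda>y. map_pmf (\<lambda>a. y[i := a]) q))"
    by (simp add: map_bind_pmf pmf.map_comp o_def)
  also have "\<dots> = map_pmf (merge_list (insert i S) x) (prod_pow n q)"
    by (simp add: bind_prod_pow_update)
  finally show ?thesis .
qed

definition resample :: "nat set \<Rightarrow> 'a list pmf \<Rightarrow> nat \<Rightarrow> 'a pmf \<Rightarrow> 'a list pmf" where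
  "resample S P n q = bind_pmf P (\<lambda>x. map_pmf (merge_list S x) (prod_pow n q))"

primrec refreshed :: "(nat \<Rightarrow> 'a option pmf) \<Rightarrow> (nat \<Rightarrow> nat) \<Rightarrow> nat \<Rightarrow> nat \<Rightarrow> nat set pmf" where
  "refreshed Pis \<sigma> L 0 = return_pmf {}"
| "refreshed Pis \<sigma> L (Suc t) = bind_pmf (refreshed Pis \<sigma> L t)
     (\<lambda>S. map_pmf (\<lambda>b. if b then insert (rr_pos \<sigma> L t) S else S)
            (bernoulli_pmf (1 - pmf (Pis t) None)))"

lemma bind_resample_step:
  assumes P_len: "set_pmf P \<subseteq> {xs. length xs = n}"
    and p: "pmf p None < 1" and q: "map_pmf the (cond_pmf p (range Some)) = q"
  shows "bind_pmf (resample S P n q) (\<lambda>x. map_pmf (step i x) p)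
       = bind_pmf (bernoulli_pmf (1 - pmf p None)) (\<lambda>b. resample (if b then insert i S else S) P n q)"
proof -
  define B where "B = bernoulli_pmf (1 - pmf p None)"
  have "bind_pmf (resample S P n q) (\<lambda>x. map_pmf (step i x) p)
      = bind_pmf P (\<lambda>x. bind_pmf B (\<lambda>b. bind_pmf (map_pmf (merge_list S x) (prod_pow n q))
          (\<lambda>y. if b then map_pmf (\<lambda>a. y[i := a]) q else return_pmf y)))"
    unfolding resample_def map_step_eq_bind_bernoulli[OF p] q B_def bind_assoc_pmf
    by (simp add: bind_commute_pmf[where A = "map_pmf _ _"])
  also have "\<dots> = bind_pmf P (\<lambda>x. bind_pmf B (\<lambda>b.
          map_pmf (merge_list (if b then insert i S else S) x) (prod_pow n q)))"
    using P_len by (auto intro!: bind_pmf_cong simp: bind_merge_prod_pow_update bind_return_pmf')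
  also have "\<dots> = bind_pmf B (\<lambda>b. resample (if b then insert i S else S) P n q)"
    unfolding resample_def by (rule bind_commute_pmf)
  finally show ?thesis unfolding B_def .
qed

lemma fwd_law_eq_bind_refreshed:
  assumes P_len: "set_pmf P \<subseteq> {xs. length xs = L}"
    and phi: "\<And>t. pmf (Pis t) None < 1"
    and cond: "\<And>t. map_pmf the (cond_pmf (Pis t) (range Some)) = PiX"
  shows "fwd_law P Pis \<sigma> L t = bind_pmf (refreshed Pis \<sigma> L t) (\<lambda>S. resample S P L PiX)"
proof (induction t)
  case 0
  show ?case by (simp add: bind_return_pmf resample_def merge_list_empty bind_return_pmf')
next
  case (Suc t)
  then show ?case
    by (simp add: bind_assoc_pmf bind_map_pmf bind_resample_step[OF P_len phi cond])
qed

lemma set_fwd_law: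
  "set_pmf P \<subseteq> {xs. length xs = L} \<Longrightarrow> set_pmf (fwd_law P Pis \<sigma> L T) \<subseteq> {xs. length xs = L}"
  by (induction T) (auto simp: step_def split: option.splits)

lemma resample_all:
  assumes "set_pmf P \<subseteq> {xs. length xs = n}" "{..<n} \<subseteq> S"
  shows "resample S P n q = prod_pow n q"
proof -
  have "resample S P n q = bind_pmf P (\<lambda>x. map_pmf id (prod_pow n q))"
    unfolding resample_def using assms set_prod_pow
    by (fastforce intro!: bind_pmf_cong map_pmf_cong merge_list_all)
  then show ?thesis by simp
qed

lemma TV_le_of_pmf_ge:
  assumes F: "finite F" and p: "set_pmf p \<subseteq> F" and q: "set_pmf q \<subseteq> F"
    and ge: "\<And>x. c * pmf q x \<le> pmf p x" and c: "c \<le> 1"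
  shows "TV p q \<le> 1 - c"
proof -
  have "pmf p x = 0" "pmf q x = 0" if "x \<notin> F" for x
    using that p q by (auto simp: pmf_eq_0_set_pmf)
  then have "(\<Sum>\<^sub>\<infinity> x. \<bar>pmf p x - pmf q x\<bar>) = (\<Sum>x\<in>F. \<bar>pmf p x - pmf q x\<bar>)"
    using F by (subst infsum_cong_neutral[where T = F]) auto
  also have "\<dots> \<le> (\<Sum>x\<in>F. pmf p x - pmf q x + 2 * (1 - c) * pmf q x)"
  proof (rule sum_mono)
    fix x
    have "0 \<le> (1 - c) * pmf q x" using c by simp
    then show "\<bar>pmf p x - pmf q x\<bar> \<le> pmf p x - pmf q x + 2 * (1 - c) * pmf q x"
      using ge[of x] by (simp add: algebra_simps)
  qed
  also have "\<dots> = 2 * (1 - c)"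
    using sum_pmf_eq_1[OF F p] sum_pmf_eq_1[OF F q]
    by (simp add: sum.distrib sum_subtractf sum_distrib_left[symmetric])
  finally show ?thesis unfolding TV_def by simp
qed

lemma TV_bind_pmf_le:
  assumes F: "finite F" "set_pmf (bind_pmf M f) \<subseteq> F" "set_pmf q \<subseteq> F"
    and A: "\<And>S. S \<in> A \<Longrightarrow> f S = q"
  shows "TV (bind_pmf M f) q \<le> measure M (- A)"
proof -
  have "measure M A * pmf q x \<le> pmf (bind_pmf M f) x" for x
  proof -
    have "measure M A * pmf q x = (\<integral>S. indicator A S * pmf q x \<partial>M)"
      by simp
    also have "\<dots> \<le> (\<integral>S. pmf (f S) x \<partial>M)"
      using A by (intro integral_mono measure_pmf.integrable_const_bound[where B = 1])
        (auto simp: indicator_def pmf_le_1)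
    finally show ?thesis by (simp add: pmf_bind)
  qed
  then have "TV (bind_pmf M f) q \<le> 1 - measure M A"
    using F by (intro TV_le_of_pmf_ge) auto
  then show ?thesis
    using measure_pmf.prob_compl[of A M] by (simp add: Compl_eq_Diff_UNIV)
qed

lemma measure_bind_pmf: "measure (bind_pmf M f) A = (\<integral>x. measure (f x) A \<partial>M)"
proof -
  have "measure (bind_pmf M f) A = pmf (map_pmf (\<lambda>x. x \<in> A) (bind_pmf M f)) True"
    by (simp add: pmf_map vimage_def)
  also have "\<dots> = (\<integral>x. pmf (map_pmf (\<lambda>x. x \<in> A) (f x)) True \<partial>M)"
    by (simp add: map_bind_pmf pmf_bind)
  finally show ?thesis
    by (simp add: pmf_map vimage_def)
qed

lemma measure_refreshed_not_mem_le:
  assumes phi: "\<And>t. pmf (Pis t) None \<le> r"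
  shows "measure (refreshed Pis \<sigma> L T) {S. j \<notin> S} \<le> r ^ card {t. t < T \<and> rr_pos \<sigma> L t = j}"
proof (induction T)
  case 0
  then show ?case by simp
next
  case (Suc T)
  define a where "a = pmf (Pis T) None"
  define i where "i = rr_pos \<sigma> L T"
  have a: "0 \<le> a" "a \<le> r" "a \<le> 1" using phi[of T] by (simp_all add: a_def pmf_le_1)
  have step_miss: "measure (bernoulli_pmf (1 - a)) {b. j \<notin> (if b then insert i S else S)}
      = (if i = j then a else 1) * indicator {S. j \<notin> S} S" for S
  proof -
    have "{b. j \<notin> (if b then insert i S else S)}
        = (if j \<in> S then {} else if i = j then {False} else UNIV)"
      by auto
    then show ?thesis
      using a by (simp add: measure_pmf_single)
  qed
  have "measure (refreshed Pis \<sigma> L (Suc T)) {S. j \<notin> S}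
      = (if i = j then a else 1) * measure (refreshed Pis \<sigma> L T) {S. j \<notin> S}"
    by (simp add: measure_bind_pmf vimage_def a_def i_def step_miss[unfolded a_def i_def])
  also have "\<dots> \<le> (if i = j then r else 1) * r ^ card {t. t < T \<and> rr_pos \<sigma> L t = j}"
    using Suc.IH a by (auto intro!: mult_mono)
  also have "\<dots> = r ^ card {t. t < Suc T \<and> rr_pos \<sigma> L t = j}"
  proof -
    have "{t. t < Suc T \<and> rr_pos \<sigma> L t = j}
        = (if i = j then insert T else id) {t. t < T \<and> rr_pos \<sigma> L t = j}"
      unfolding i_def using less_Suc_eq by auto
    then show ?thesis by simp
  qed
  finally show ?case .
qed

lemma card_rr_pos_visits_ge:
  assumes perm: "\<sigma> permutes {..<L}" and j: "j < L"
  shows "T div L \<le> card {t. t < T \<and> rr_pos \<sigma> L t = j}"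
proof -
  obtain r where r: "r < L" "\<sigma> r = j"
    using permutes_image[OF perm] j by (metis imageE lessThan_iff)
  have visits: "(\<lambda>k. k * L + r) ` {..<T div L} \<subseteq> {t. t < T \<and> rr_pos \<sigma> L t = j}"
  proof clarify
    fix k assume "k < T div L"
    then have "(k + 1) * L \<le> T div L * L" by (intro mult_right_mono) auto
    also have "\<dots> \<le> T" by simp
    finally show "k * L + r < T \<and> rr_pos \<sigma> L (k * L + r) = j"
      using r by (simp add: rr_pos_def)
  qed
  have "inj_on (\<lambda>k. k * L + r) {..<T div L}"
    using r by (auto simp: inj_on_def)
  then have "T div L = card ((\<lambda>k. k * L + r) ` {..<T div L})"
    by (simp add: card_image)
  also have "\<dots> \<le> card {t. t < T \<and> rr_pos \<sigma> L t = j}"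
    by (rule card_mono[OF _ visits]) simp
  finally show ?thesis .
qed

lemma TV_fwd_law_le:
  fixes P :: "'a::finite list pmf"
  assumes perm: "\<sigma> permutes {..<L}"
    and P_len: "set_pmf P \<subseteq> {xs. length xs = L}"
    and phi: "\<And>t. pmf (Pis t) None \<le> r" and r: "r < 1"
    and cond: "\<And>t. map_pmf the (cond_pmf (Pis t) (range Some)) = PiX"
  shows "TV (fwd_law P Pis \<sigma> L T) (prod_pow L PiX) \<le> real L * r ^ (T div L)"
proof -
  define M where "M = refreshed Pis \<sigma> L T"
  have r0: "0 \<le> r" using phi[of 0] pmf_nonneg[of "Pis 0" None] by linarith
  have fin: "finite {xs :: 'a list. length xs = L}"
    using finite_lists_length_eq[of "UNIV :: 'a set" L] by simp
  have law: "fwd_law P Pis \<sigma> L T = bind_pmf M (\<lambda>S. resample S P L PiX)"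
    unfolding M_def using phi r by (intro fwd_law_eq_bind_refreshed[OF P_len _ cond]) (rule le_less_trans)
  have "TV (fwd_law P Pis \<sigma> L T) (prod_pow L PiX) \<le> measure M (- {S. {..<L} \<subseteq> S})"
    using set_fwd_law[OF P_len, of Pis \<sigma> T] resample_all[OF P_len]
    unfolding law by (intro TV_bind_pmf_le[OF fin _ set_prod_pow]) auto
  also have "- {S. {..<L} \<subseteq> S} = (\<Union>j<L. {S. j \<notin> S})" by auto
  also have "measure M (\<Union>j<L. {S. j \<notin> S}) \<le> (\<Sum>j<L. measure M {S. j \<notin> S})"
    by (rule measure_pmf.finite_measure_subadditive_finite) auto
  also have "\<dots> \<le> (\<Sum>j<L. r ^ (T div L))"
  proof (rule sum_mono)
    fix j assume "j \<in> {..<L}"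
    then have "r ^ card {t. t < T \<and> rr_pos \<sigma> L t = j} \<le> r ^ (T div L)"
      using card_rr_pos_visits_ge[OF perm] r r0 by (intro power_decreasing) auto
    then show "measure M {S. j \<notin> S} \<le> r ^ (T div L)"
      using measure_refreshed_not_mem_le[OF phi] unfolding M_def by (rule order_trans[rotated])
  qed
  finally show ?thesis by simp
qed

theorem lemma1:
  fixes P :: "'x::finite list pmf"
    and Pis :: "nat \<Rightarrow> 'x option pmf"
    and PiX :: "'x pmf"
    and \<sigma> :: "nat \<Rightarrow> nat"
    and L :: nat and \<epsilon> :: real
  assumes perm: "\<sigma> permutes {..<L}"
    and P_len: "set_pmf P \<subseteq> {xs. length xs = L}"
    and eps: "\<epsilon> > 0"
    and phi: "\<And>t. pmf (Pis t) None \<le> 1 - \<epsilon>"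
    and cond: "\<And>t. map_pmf the (cond_pmf (Pis t) (range Some)) = PiX"
  shows "(\<forall>T. TV (fwd_law P Pis \<sigma> L T) (prod_pow L PiX)
              \<le> real L * (1 - \<epsilon>) ^ (T div L))
         \<and> (\<lambda>T. TV (fwd_law P Pis \<sigma> L T) (prod_pow L PiX)) \<longlonglongrightarrow> 0"
proof -
  have bound: "TV (fwd_law P Pis \<sigma> L T) (prod_pow L PiX) \<le> real L * (1 - \<epsilon>) ^ (T div L)" for T
    using TV_fwd_law_le[OF perm P_len phi _ cond] eps by simp
  have "\<epsilon> \<le> 1" using phi[of 0] pmf_nonneg[of "Pis 0" None] by linarith
  then have "(\<lambda>n. (1 - \<epsilon>) ^ n) \<longlonglongrightarrow> 0"
    using eps by (intro LIMSEQ_power_zero) auto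
  then have lim: "(\<lambda>T. real L * (1 - \<epsilon>) ^ (T div L)) \<longlonglongrightarrow> 0"
    by (cases "L = 0")
       (auto intro: tendsto_mult_right_zero filterlim_compose filterlim_at_top_div_const_nat)
  have "0 \<le> TV (fwd_law P Pis \<sigma> L T) (prod_pow L PiX)" for T
    unfolding TV_def by (simp add: infsum_nonneg)
  with bound lim show ?thesis
    by (auto intro: tendsto_sandwich[OF _ _ tendsto_const lim])
qed

end
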